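(* Let $q$ be a prime power and let $i,d,k,n,\bar{s}$ be positive integers with $1\leq i<\lfloor (d+1)/2\rfloor$, $d<k$, $n-(\bar{s}+1)k\geq d-i$, and $1\leq \bar{s}\leq q(q^{k-1}-1)/(q^{k-i}-1)$. Then: (i) $M_q(i;d,k,n)$ is an $\bar{s}^{\bar{e}_2}$-disjunct matrix, where $$\bar{e}_2=q^{(d-i)((\bar{s}+1)k-i)}\left[n-(\bar{s}+1)k\atop d-i\right]_q\left(q^{k-i}\left[k-1\atop i-1\right]_q-(\bar{s}-1)q^{k-i-1}\left[k-2\atop i-1\right]_q\right)-1;$$ (ii) with $q,i,d,k,\bar{s}$ fixed and $n\to+\infty$, $\lim_{n\to+\infty}\frac{\bar{e}_2+1}{\bar{e}_1+1}=+\infty$, where $\bar{e}_1=q^{k-d}\left[k-1\atop d-1\right]_q-(\bar{s}-1)q^{k-d-1}\left[k-2\atop d-1\right]_q-1$.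
   Context: $\mathbb{F}_q$ is the finite field with $q$ elements. For integers $m_1,m_2$ the Gaussian coefficient is $\left[m_2\atop m_1\right]_q=\prod_{t=m_2-m_1+1}^{m_2}(q^t-1)\big/\prod_{t=1}^{m_1}(q^t-1)$, with $\left[m_2\atop 0\right]_q=1$ and $\left[m_2\atop m_1\right]_q=0$ whenever $m_1<0$ or $m_2<m_1$. For $1\leq d<k<n$ and $\max\{0,d+k-n\}\leq i\leq d$, $M_q(i;d,k,n)$ is the binary matrix whose rows are indexed by the $d$-dimensional subspaces of $\mathbb{F}_q^n$ and whose columns are indexed by the $k$-dimensional subspaces of $\mathbb{F}_q^n$, with entry $M_q(A,B)=1$ iff $\dim(A\cap B)=i$. Viewing each column as the set of row indices where it has a 1-entry, a binary matrix is $s^e$-disjunct if for every column $C$ and every $s$ other columns $C_1,\dots,C_s$, the column $C$ has at least $e+1$ 1-entries not in $C_1\cup\cdots\cup C_s$. *)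

theory Defs
  imports Complex_Main "HOL-Library.Function_Algebras"
begin

text \<open>F_q^n is modelled as the functions nat => 'a vanishing outside {0..<n},
  where 'a is a finite field with q = CARD('a) elements.\<close>

definition fvec_scale :: "'a::field \<Rightarrow> (nat \<Rightarrow> 'a) \<Rightarrow> (nat \<Rightarrow> 'a)" where
  "fvec_scale c v = (\<lambda>j. c * v j)"

definition Fqn :: "nat \<Rightarrow> (nat \<Rightarrow> 'a::field) set" where
  "Fqn n = {v. \<forall>j\<ge>n. v j = 0}"

definition sdim :: "(nat \<Rightarrow> 'a::field) set \<Rightarrow> nat" where
  "sdim S = vector_space.dim fvec_scale S"

definition subspaces_of_dim :: "nat \<Rightarrow> nat \<Rightarrow> (nat \<Rightarrow> 'a::field) set set" where
  "subspaces_of_dim n m =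
     {S. S \<subseteq> Fqn n \<and> module.subspace fvec_scale S \<and> sdim S = m}"

definition Mq_entry :: "nat \<Rightarrow> (nat \<Rightarrow> 'a::field) set \<Rightarrow> (nat \<Rightarrow> 'a) set \<Rightarrow> bool" where
  "Mq_entry i A B \<longleftrightarrow> sdim (A \<inter> B) = i"

definition disjunct :: "'r set \<Rightarrow> 'c set \<Rightarrow> ('r \<Rightarrow> 'c \<Rightarrow> bool) \<Rightarrow> nat \<Rightarrow> real \<Rightarrow> bool" where
  "disjunct R Cols M s e \<longleftrightarrow>
     (\<forall>C\<in>Cols. \<forall>Cs. Cs \<subseteq> Cols \<and> C \<notin> Cs \<and> card Cs = s \<longrightarrow>
        e + 1 \<le> real (card {A\<in>R. M A C \<and> (\<forall>B\<in>Cs. \<not> M A B)}))"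

definition gauss :: "nat \<Rightarrow> int \<Rightarrow> int \<Rightarrow> real" where
  "gauss q m2 m1 = (if m1 < 0 \<or> m2 < m1 then 0 else
     (\<Prod>t\<in>{m2-m1+1..m2}. real q ^ nat t - 1) / (\<Prod>t\<in>{1..m1}. real q ^ nat t - 1))"

definition ebar2 :: "nat \<Rightarrow> nat \<Rightarrow> nat \<Rightarrow> nat \<Rightarrow> nat \<Rightarrow> nat \<Rightarrow> real" where
  "ebar2 q i d k n s =
     real q ^ ((d - i) * ((s + 1) * k - i)) * gauss q (int n - int (s + 1) * int k) (int d - int i)
     * (real q ^ (k - i) * gauss q (int k - 1) (int i - 1)
        - (real s - 1) * real q ^ (k - i - 1) * gauss q (int k - 2) (int i - 1)) - 1"

definition ebar1 :: "nat \<Rightarrow> nat \<Rightarrow> nat \<Rightarrow> nat \<Rightarrow> real" where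
  "ebar1 q d k s =
     real q ^ (k - d) * gauss q (int k - 1) (int d - 1)
     - (real s - 1) * real q ^ (k - d - 1) * gauss q (int k - 2) (int d - 1) - 1"

end

theory Submission
  imports Defs "HOL-Library.FuncSet" "HOL-Library.Cardinality"
begin

(*
  Part (i) is a double count. Fix a column C and s further columns B_j, and let U be the span
  of all of them, of dimension at most (s+1)k. Take an independent i-tuple in C lying in no B_j
  and extend it by d-i vectors independent modulo U. The span A of these d vectors meets U,
  hence C and every B_j, exactly in the span I of the i-tuple; so dim (A \<inter> C) = i while
  dim (A \<inter> B_j) < i because I is not contained in B_j. The i-tuples of C lying in some B_j lie
  in hyperplanes H_j of C containing C \<inter> B_j, any two of which share a subspace of codimension 2;
  this bounds the number of such tuples. Dividing the number of such pairs of tuples by the number of pairs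
  spanning one fixed A gives the lower bound ebar2 + 1 on the number of rows isolating C.

  Part (ii): ebar1 does not depend on n, while ebar2 + 1 is a fixed multiple of the Gaussian
  coefficient [n-(s+1)k, d-i]_q, which is at least n-(s+1)k. The bound on s makes both
  multipliers positive.
*)

section \<open>Subspaces of a finite vector space\<close>

type_synonym 'a fvec = "nat \<Rightarrow> 'a"

lemma vector_space_fvec_scale: "vector_space (fvec_scale :: 'a::field \<Rightarrow> 'a fvec \<Rightarrow> 'a fvec)"
  by unfold_locales (auto simp: fvec_scale_def fun_eq_iff algebra_simps)

global_interpretation fv: vector_space "fvec_scale :: 'a::field \<Rightarrow> 'a fvec \<Rightarrow> 'a fvec"
  by (rule vector_space_fvec_scale)

lemma CARD_field_ge_2: "CARD('a::{field,finite}) \<ge> 2"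
proof -
  have "card {0::'a, 1} = 2" by simp
  moreover have "card {0::'a, 1} \<le> CARD('a)" by (rule card_mono) auto
  ultimately show ?thesis by simp
qed

lemma finite_span:
  fixes X :: "'a::{field,finite} fvec set"
  assumes "finite X"
  shows "finite (fv.span X)"
proof -
  let ?comb = "\<lambda>u. \<Sum>v\<in>X. fvec_scale (u v) v"
  have "fv.span X = range ?comb" by (rule fv.span_finite[OF assms])
  also have "\<dots> = ?comb ` (X \<rightarrow>\<^sub>E UNIV)"
  proof (intro equalityI subsetI)
    fix y assume "y \<in> range ?comb"
    then obtain u where "y = ?comb u" by auto
    also have "\<dots> = ?comb (restrict u X)" by (rule sum.cong) auto
    finally have "y = ?comb (restrict u X)" .
    then show "y \<in> ?comb ` (X \<rightarrow>\<^sub>E UNIV)" by (rule image_eqI[where x="restrict u X"]) simp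
  qed auto
  finally show ?thesis using assms by (simp add: finite_PiE)
qed

lemma card_span_insert:
  fixes X :: "'a::{field,finite} fvec set"
  assumes "finite X" "w \<notin> fv.span X"
  shows "card (fv.span (insert w X)) = CARD('a) * card (fv.span X)"
proof -
  let ?f = "\<lambda>(c, x). x + fvec_scale c w"
  have "fv.span (insert w X) = ?f ` (UNIV \<times> fv.span X)"
  proof (intro equalityI subsetI)
    fix x assume "x \<in> fv.span (insert w X)"
    then obtain c where "x - fvec_scale c w \<in> fv.span X" unfolding fv.span_insert by auto
    moreover have "x = ?f (c, x - fvec_scale c w)" by simp
    ultimately show "x \<in> ?f ` (UNIV \<times> fv.span X)" by blast
  next
    fix y assume "y \<in> ?f ` (UNIV \<times> fv.span X)"
    then obtain c x where "x \<in> fv.span X" "y = x + fvec_scale c w" by auto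
    moreover have "fv.span X \<subseteq> fv.span (insert w X)" by (rule fv.span_mono) auto
    moreover have "fvec_scale c w \<in> fv.span (insert w X)" by (intro fv.span_scale fv.span_base) simp
    ultimately show "y \<in> fv.span (insert w X)" by (auto intro: fv.span_add)
  qed
  moreover have "inj_on ?f (UNIV \<times> fv.span X)"
  proof (rule inj_onI, clarify)
    fix c x c' x'
    assume x: "x \<in> fv.span X" "x' \<in> fv.span X" and eq: "x + fvec_scale c w = x' + fvec_scale c' w"
    have "fvec_scale (c - c') w = x' - x"
      using eq by (simp add: algebra_simps)
    then have "fvec_scale (c - c') w \<in> fv.span X" using fv.span_diff[OF x(2,1)] by simp
    then have "fvec_scale (inverse (c - c')) (fvec_scale (c - c') w) \<in> fv.span X"
      by (rule fv.span_scale)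
    then have "c = c'" using assms(2) by (cases "c = c'") auto
    with eq show "c = c' \<and> x = x'" by simp
  qed
  ultimately show ?thesis by (simp add: card_image card_cartesian_product)
qed

lemma card_span_independent:
  fixes B :: "'a::{field,finite} fvec set"
  assumes "finite B" "fv.independent B"
  shows "card (fv.span B) = CARD('a) ^ card B"
  using assms
proof (induction B rule: finite_induct)
  case (insert b B)
  then show ?case using fv.independent_insert[of b B] card_span_insert[of B b] by auto
qed simp

lemma card_subspace:
  fixes S :: "'a::{field,finite} fvec set"
  assumes "finite S" "fv.subspace S"
  shows "card S = CARD('a) ^ fv.dim S"
proof -
  obtain B where B: "B \<subseteq> S" "fv.independent B" "S \<subseteq> fv.span B" "card B = fv.dim S"
    by (rule fv.basis_exists)
  then have "fv.span B = S" using assms by (intro fv.span_subspace) auto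
  moreover have "finite B" using B(1) assms(1) finite_subset by auto
  ultimately show ?thesis using card_span_independent[of B] B by simp
qed

lemma dim_eq_if_card_eq:
  fixes S :: "'a::{field,finite} fvec set"
  assumes "finite S" "fv.subspace S" "card S = CARD('a) ^ m"
  shows "fv.dim S = m"
  using card_subspace[OF assms(1,2)] assms(3) CARD_field_ge_2[where 'a='a]
  by simp

lemma Fqn_subspace: "fv.subspace (Fqn n :: 'a::field fvec set)"
  unfolding fv.subspace_def Fqn_def by (auto simp: fvec_scale_def)

lemma Fqn_Suc: "Fqn (Suc n) = (\<lambda>(c, v). v(n := c)) ` ((UNIV :: 'a::field set) \<times> Fqn n)"
proof (intro equalityI subsetI)
  fix x :: "'a fvec" assume "x \<in> Fqn (Suc n)"
  then have "x(n := 0) \<in> Fqn n" by (auto simp: Fqn_def)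
  then show "x \<in> (\<lambda>(c, v). v(n := c)) ` (UNIV \<times> Fqn n)"
    by (intro image_eqI[of _ _ "(x n, x(n := 0))"]) auto
qed (auto simp: Fqn_def)

lemma finite_card_Fqn:
  "finite (Fqn n :: 'a::{field,finite} fvec set) \<and> card (Fqn n :: 'a fvec set) = CARD('a) ^ n"
proof (induction n)
  case 0
  have "Fqn 0 = {0 :: 'a fvec}" by (auto simp: Fqn_def)
  then show ?case by simp
next
  case (Suc n)
  have "inj_on (\<lambda>(c, v). v(n := c)) ((UNIV :: 'a set) \<times> Fqn n)"
  proof (rule inj_onI, clarify)
    fix c c' :: 'a and v v' :: "'a fvec"
    assume "v \<in> Fqn n" "v' \<in> Fqn n" and eq: "v(n := c) = v'(n := c')"
    then have "v n = 0" "v' n = 0" by (auto simp: Fqn_def)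
    moreover have "c = c'" using fun_cong[OF eq, of n] by simp
    ultimately show "c = c' \<and> v = v'" using eq by (metis fun_upd_triv fun_upd_upd)
  qed
  then show ?case unfolding Fqn_Suc using Suc by (simp add: card_image card_cartesian_product)
qed

lemma finite_Fqn: "finite (Fqn n :: 'a::{field,finite} fvec set)"
  and card_Fqn: "card (Fqn n :: 'a::{field,finite} fvec set) = CARD('a) ^ n"
  using finite_card_Fqn by blast+

lemma subspaces_of_dimD:
  fixes S :: "'a::{field,finite} fvec set"
  assumes "S \<in> subspaces_of_dim n m"
  shows "finite S" "fv.subspace S" "card S = CARD('a) ^ m" "S \<subseteq> Fqn n"
proof -
  show f: "finite S" and sub: "fv.subspace S" and "S \<subseteq> Fqn n"
    using assms finite_Fqn finite_subset unfolding subspaces_of_dim_def by auto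
  show "card S = CARD('a) ^ m"
    using card_subspace[OF f sub] assms unfolding subspaces_of_dim_def sdim_def by auto
qed

lemma exists_subspace_between:
  fixes X C :: "'a::{field,finite} fvec set"
  assumes C: "finite C" "fv.subspace C" and X: "fv.subspace X" "X \<subseteq> C"
    and "card X = CARD('a) ^ a" "card C = CARD('a) ^ c" "a \<le> m" "m \<le> c"
  shows "\<exists>H. fv.subspace H \<and> X \<subseteq> H \<and> H \<subseteq> C \<and> card H = CARD('a) ^ m"
  using assms(7,8)
proof (induction m)
  case 0 then show ?case using X assms(5) by auto
next
  case (Suc m)
  show ?case
  proof (cases "a = Suc m")
    case True then show ?thesis using X assms(5) by blast
  next
    case False
    then obtain H where H: "fv.subspace H" "X \<subseteq> H" "H \<subseteq> C" "card H = CARD('a) ^ m"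
      using Suc by auto
    have "CARD('a) ^ m < CARD('a) ^ c"
      using Suc.prems CARD_field_ge_2[where 'a='a] by (intro power_strict_increasing) auto
    then have "H \<noteq> C" using H(4) assms(6) by auto
    then obtain w where w: "w \<in> C" "w \<notin> H" using H(3) by auto
    have "finite H" using H(3) C(1) finite_subset by auto
    moreover have span_H: "fv.span H = H" using H(1) by simp
    ultimately have "card (fv.span (insert w H)) = CARD('a) * card H"
      using w card_span_insert[of H w] by (simp add: span_H)
    moreover have "fv.span (insert w H) \<subseteq> C" using w H C by (intro fv.span_minimal) auto
    moreover have "X \<subseteq> fv.span (insert w H)" using H fv.span_superset[of "insert w H"] by auto
    ultimately show ?thesis using H(4) by (intro exI[of _ "fv.span (insert w H)"]) auto
  qed
qed

(* The fibres of (a, b) \<mapsto> a - b on A \<times> B are translates of A \<inter> B, and its image lies in C. *)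
lemma card_mult_le_card_inter_subspaces:
  fixes A B C :: "'a::{field,finite} fvec set"
  assumes C: "finite C" "fv.subspace C"
    and A: "fv.subspace A" "A \<subseteq> C" and B: "fv.subspace B" "B \<subseteq> C"
  shows "card A * card B \<le> card C * card (A \<inter> B)"
proof -
  let ?g = "\<lambda>(a, b). a - b"
  have fin: "finite A" "finite B" using A B C finite_subset by auto
  have fibre: "card {p \<in> A \<times> B. ?g p = c} \<le> card (A \<inter> B)" for c
  proof (cases "{p \<in> A \<times> B. ?g p = c} = {}")
    case False
    then obtain a0 b0 where ab0: "a0 \<in> A" "b0 \<in> B" "a0 - b0 = c" by auto
    have "inj_on (\<lambda>(a, b). a - a0) {p \<in> A \<times> B. ?g p = c}"
      by (rule inj_onI) (auto simp: algebra_simps)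
    moreover have "(\<lambda>(a, b). a - a0) ` {p \<in> A \<times> B. ?g p = c} \<subseteq> A \<inter> B"
    proof
      fix y assume "y \<in> (\<lambda>(a, b). a - a0) ` {p \<in> A \<times> B. ?g p = c}"
      then obtain a b where ab: "a \<in> A" "b \<in> B" "a - b = c" and y: "y = a - a0" by auto
      have "a - a0 = b - b0" using ab ab0 by (simp add: algebra_simps)
      moreover have "a - a0 \<in> A" "b - b0 \<in> B"
        using ab ab0 A(1) B(1) by (simp_all add: fv.subspace_diff)
      ultimately show "y \<in> A \<inter> B" using y by simp
    qed
    ultimately show ?thesis by (rule card_inj_on_le) (use fin in auto)
  qed (metis card.empty zero_le)
  have "A \<times> B = (\<Union>c\<in>?g ` (A \<times> B). {p \<in> A \<times> B. ?g p = c})" by auto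
  then have "card (A \<times> B) \<le> (\<Sum>c\<in>?g ` (A \<times> B). card {p \<in> A \<times> B. ?g p = c})"
    using card_UN_le[of "?g ` (A \<times> B)" "\<lambda>c. {p \<in> A \<times> B. ?g p = c}"] fin by simp
  also have "\<dots> \<le> card (?g ` (A \<times> B)) * card (A \<inter> B)"
    using sum_mono[OF fibre] by simp
  also have "\<dots> \<le> card C * card (A \<inter> B)"
    using A B C by (intro mult_right_mono card_mono) (auto intro!: fv.subspace_diff)
  finally show ?thesis by (simp add: card_cartesian_product)
qed

lemma card_span_Un_le:
  fixes X Y :: "'a::{field,finite} fvec set"
  assumes "finite X" "finite Y"
  shows "card (fv.span (X \<union> Y)) \<le> card (fv.span X) * card (fv.span Y)"
proof -
  have "fv.span (X \<union> Y) = (\<lambda>(x, y). x + y) ` (fv.span X \<times> fv.span Y)"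
    unfolding fv.span_Un by auto
  then show ?thesis
    using card_image_le[of "fv.span X \<times> fv.span Y" "\<lambda>(x, y). x + y"]
    by (simp add: finite_span assms card_cartesian_product)
qed

lemma card_span_UN_le:
  fixes X :: "'a::{field,finite} fvec set" and F :: "'a fvec set set"
  assumes "finite X" "finite F" "\<And>B. B \<in> F \<Longrightarrow> finite B"
  shows "card (fv.span (X \<union> \<Union>F)) \<le> card (fv.span X) * (\<Prod>B\<in>F. card (fv.span B))"
  using assms(2,3)
proof (induction F rule: finite_induct)
  case (insert B F)
  have "X \<union> \<Union>(insert B F) = (X \<union> \<Union>F) \<union> B" by auto
  then have "card (fv.span (X \<union> \<Union>(insert B F))) \<le> card (fv.span (X \<union> \<Union>F)) * card (fv.span B)"
    using insert assms(1) by (simp add: card_span_Un_le)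
  also have "\<dots> \<le> card (fv.span X) * (\<Prod>B\<in>F. card (fv.span B)) * card (fv.span B)"
    using insert by (intro mult_right_mono) auto
  finally show ?case using insert by (simp add: algebra_simps)
qed simp

section \<open>Tuples independent modulo a subspace\<close>

(* ws is linearly independent modulo span U; this is phrased through the size of the span,
   which grows by the factor q exactly when an independent vector is adjoined. *)
definition indep_over :: "'a::{field,finite} fvec set \<Rightarrow> 'a fvec list \<Rightarrow> bool" where
  "indep_over U ws \<longleftrightarrow> card (fv.span (U \<union> set ws)) = card (fv.span U) * CARD('a) ^ length ws"

definition indep_tuples :: "'a::{field,finite} fvec set \<Rightarrow> 'a fvec set \<Rightarrow> nat \<Rightarrow> 'a fvec list set" where
  "indep_tuples V U r = {ws. length ws = r \<and> set ws \<subseteq> V \<and> indep_over U ws}"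

lemma card_span_pos:
  fixes X :: "'a::{field,finite} fvec set"
  assumes "finite X"
  shows "card (fv.span X) > 0"
  using finite_span[OF assms] fv.span_zero[of X] by (auto simp: card_gt_0_iff)

lemma card_span_insert_if:
  fixes X :: "'a::{field,finite} fvec set"
  assumes "finite X"
  shows "card (fv.span (insert w X)) =
    (if w \<in> fv.span X then card (fv.span X) else CARD('a) * card (fv.span X))"
  using card_span_insert[OF assms] fv.span_redundant[of w X] by auto

lemma card_span_Un_list_le:
  fixes U :: "'a::{field,finite} fvec set"
  assumes "finite U"
  shows "card (fv.span (U \<union> set ws)) \<le> card (fv.span U) * CARD('a) ^ length ws"
proof (induction ws)
  case (Cons w ws)
  have "U \<union> set (w # ws) = insert w (U \<union> set ws)" by auto
  then have "card (fv.span (U \<union> set (w # ws))) \<le> CARD('a) * card (fv.span (U \<union> set ws))"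
    using card_span_insert_if[of "U \<union> set ws" w] assms by auto
  also have "\<dots> \<le> CARD('a) * (card (fv.span U) * CARD('a) ^ length ws)"
    using Cons by simp
  finally show ?case by (simp add: algebra_simps)
qed simp

lemma indep_over_Cons:
  fixes U :: "'a::{field,finite} fvec set"
  assumes "finite U"
  shows "indep_over U (w # ws) \<longleftrightarrow> indep_over U ws \<and> w \<notin> fv.span (U \<union> set ws)"
proof -
  define a where "a = card (fv.span (U \<union> set ws))"
  define b where "b = card (fv.span U) * CARD('a) ^ length ws"
  have "a \<le> b" unfolding a_def b_def by (rule card_span_Un_list_le[OF assms])
  have "1 * b < CARD('a) * b"
    unfolding b_def using card_span_pos[OF assms] CARD_field_ge_2[where 'a='a]
    by (intro mult_strict_right_mono) auto
  with \<open>a \<le> b\<close> have "a < CARD('a) * b" by linarith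
  moreover have "U \<union> set (w # ws) = insert w (U \<union> set ws)" by auto
  then have "card (fv.span (U \<union> set (w # ws))) =
      (if w \<in> fv.span (U \<union> set ws) then a else CARD('a) * a)"
    unfolding a_def using card_span_insert_if[of "U \<union> set ws" w] assms by auto
  moreover have "indep_over U (w # ws) \<longleftrightarrow> card (fv.span (U \<union> set (w # ws))) = CARD('a) * b"
    unfolding indep_over_def b_def by (simp add: algebra_simps)
  moreover have "indep_over U ws \<longleftrightarrow> a = b" unfolding indep_over_def a_def b_def ..
  ultimately show ?thesis using CARD_field_ge_2[where 'a='a] by auto
qed

lemma finite_indep_tuples:
  fixes V :: "'a::{field,finite} fvec set"
  assumes "finite V"
  shows "finite (indep_tuples V U r)"
proof (rule finite_subset)
  show "indep_tuples V U r \<subseteq> {ws. set ws \<subseteq> V \<and> length ws = r}" unfolding indep_tuples_def by auto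
qed (use assms finite_lists_length_eq in auto)

lemma indep_tuples_mono: "V \<subseteq> V' \<Longrightarrow> indep_tuples V U r \<subseteq> indep_tuples V' U r"
  unfolding indep_tuples_def by auto

lemma indep_tuples_Suc:
  fixes U :: "'a::{field,finite} fvec set"
  assumes "finite U"
  shows "indep_tuples V U (Suc r) =
    (\<lambda>(ws, w). w # ws) ` (SIGMA ws:indep_tuples V U r. V - fv.span (U \<union> set ws))"
proof (intro equalityI subsetI)
  fix xs assume xs: "xs \<in> indep_tuples V U (Suc r)"
  then obtain w ws where "xs = w # ws" unfolding indep_tuples_def by (cases xs) auto
  then show "xs \<in> (\<lambda>(ws, w). w # ws) ` (SIGMA ws:indep_tuples V U r. V - fv.span (U \<union> set ws))"
    using xs indep_over_Cons[OF assms, of w ws] unfolding indep_tuples_def by force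
qed (use indep_over_Cons[OF assms] in \<open>auto simp: indep_tuples_def\<close>)

lemma card_indep_tuples:
  fixes U V :: "'a::{field,finite} fvec set"
  assumes U: "finite U" and V: "finite V" "fv.subspace V" and UV: "fv.span U \<subseteq> V"
  shows "real (card (indep_tuples V U r)) =
    (\<Prod>t<r. real (card V) - real (card (fv.span U)) * real CARD('a) ^ t)"
proof (induction r)
  case 0
  have "indep_tuples V U 0 = {[]}" unfolding indep_tuples_def indep_over_def by auto
  then show ?case by simp
next
  case (Suc r)
  let ?m = "card V - card (fv.span U) * CARD('a) ^ r"
  have span_sub: "fv.span (U \<union> set ws) \<subseteq> V" if "ws \<in> indep_tuples V U r" for ws
    using that UV fv.span_superset[of U] unfolding indep_tuples_def
    by (intro fv.span_minimal[OF _ V(2)]) auto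
  have card_diff: "card (V - fv.span (U \<union> set ws)) = ?m" if "ws \<in> indep_tuples V U r" for ws
    using that span_sub[OF that] V(1) card_Diff_subset[of "fv.span (U \<union> set ws)" V]
      finite_subset[OF span_sub[OF that]]
    unfolding indep_tuples_def indep_over_def by auto
  have "inj_on (\<lambda>(ws, w). w # ws) (SIGMA ws:indep_tuples V U r. V - fv.span (U \<union> set ws))"
    by (rule inj_onI) auto
  then have "card (indep_tuples V U (Suc r)) =
      card (SIGMA ws:indep_tuples V U r. V - fv.span (U \<union> set ws))"
    unfolding indep_tuples_Suc[OF U] by (rule card_image)
  also have "\<dots> = (\<Sum>ws\<in>indep_tuples V U r. card (V - fv.span (U \<union> set ws)))"
    by (rule card_SigmaI) (use finite_indep_tuples V(1) in auto)
  also have "\<dots> = card (indep_tuples V U r) * ?m"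
    using card_diff by simp
  finally have step: "card (indep_tuples V U (Suc r)) = card (indep_tuples V U r) * ?m" .
  show ?case
  proof (cases "indep_tuples V U r = {}")
    case True
    then show ?thesis using step Suc.IH by simp
  next
    case False
    then obtain ws where ws: "ws \<in> indep_tuples V U r" by auto
    then have "card (fv.span U) * CARD('a) ^ r \<le> card V"
      using card_mono[OF V(1) span_sub[OF ws]] unfolding indep_tuples_def indep_over_def by simp
    then show ?thesis using step Suc.IH by simp
  qed
qed

lemma indep_over_anti_mono:
  fixes U U' :: "'a::{field,finite} fvec set"
  assumes U: "finite U" and U': "finite U'" and sub: "fv.span U' \<subseteq> fv.span U"
  shows "indep_over U ws \<Longrightarrow> indep_over U' ws"
proof (induction ws)
  case Nil then show ?case by (simp add: indep_over_def)
next
  case (Cons w ws)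
  then have ws: "indep_over U ws" "w \<notin> fv.span (U \<union> set ws)" using indep_over_Cons[OF U] by auto
  have "U' \<union> set ws \<subseteq> fv.span (U \<union> set ws)"
    using sub fv.span_superset[of U'] fv.span_superset[of "U \<union> set ws"] fv.span_mono[of U "U \<union> set ws"]
    by auto
  then have "fv.span (U' \<union> set ws) \<subseteq> fv.span (U \<union> set ws)" by (intro fv.span_minimal) auto
  then show ?case using Cons ws indep_over_Cons[OF U'] by auto
qed

lemma span_indep_over_inter:
  fixes U I :: "'a::{field,finite} fvec set"
  assumes U: "finite U" and I: "fv.span I \<subseteq> fv.span U"
  shows "indep_over U ws \<Longrightarrow> fv.span (I \<union> set ws) \<inter> fv.span U \<subseteq> fv.span I"
proof (induction ws)
  case Nil then show ?case by simp
next
  case (Cons w ws)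
  then have ws: "indep_over U ws" "w \<notin> fv.span (U \<union> set ws)" using indep_over_Cons[OF U] by auto
  show ?case
  proof
    fix x assume x: "x \<in> fv.span (I \<union> set (w # ws)) \<inter> fv.span U"
    then obtain c where c: "x - fvec_scale c w \<in> fv.span (I \<union> set ws)"
      using fv.span_insert[of w "I \<union> set ws"] by auto
    have "I \<union> set ws \<subseteq> fv.span (U \<union> set ws)"
      using I fv.span_superset[of I] fv.span_superset[of "U \<union> set ws"] fv.span_mono[of U "U \<union> set ws"]
      by auto
    then have IU: "fv.span (I \<union> set ws) \<subseteq> fv.span (U \<union> set ws)" by (intro fv.span_minimal) auto
    show "x \<in> fv.span I"
    proof (cases "c = 0")
      case True
      then show ?thesis using c x Cons.IH[OF ws(1)] by auto
    next
      case False
      have "x \<in> fv.span (U \<union> set ws)" using x fv.span_mono[of U "U \<union> set ws"] by auto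
      then have "x - (x - fvec_scale c w) \<in> fv.span (U \<union> set ws)"
        by (rule fv.span_diff) (use c IU in auto)
      then have "fvec_scale c w \<in> fv.span (U \<union> set ws)" by simp
      then have "fvec_scale (inverse c) (fvec_scale c w) \<in> fv.span (U \<union> set ws)"
        by (rule fv.span_scale)
      then show ?thesis using False ws(2) by simp
    qed
  qed
qed

lemma span_indep_extension:
  fixes U :: "'a::{field,finite} fvec set"
  assumes U: "finite U" and bs: "indep_over {} bs" "fv.span (set bs) \<subseteq> fv.span U"
    and ws: "indep_over U ws"
  shows "fv.span (set bs \<union> set ws) \<inter> fv.span U = fv.span (set bs)"
    and "card (fv.span (set bs \<union> set ws)) = CARD('a) ^ (length bs + length ws)"
proof -
  show "fv.span (set bs \<union> set ws) \<inter> fv.span U = fv.span (set bs)"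
    using span_indep_over_inter[OF U bs(2) ws] bs(2) fv.span_mono[of "set bs" "set bs \<union> set ws"]
    by auto
  have "indep_over (set bs) ws" using indep_over_anti_mono[OF U _ bs(2) ws] by simp
  then show "card (fv.span (set bs \<union> set ws)) = CARD('a) ^ (length bs + length ws)"
    using bs(1) unfolding indep_over_def by (simp add: power_add)
qed

section \<open>Numbers of independent tuples and Gaussian coefficients\<close>

definition q_falling :: "real \<Rightarrow> nat \<Rightarrow> nat \<Rightarrow> real" where
  "q_falling x m r = (\<Prod>t<r. x ^ m - x ^ t)"

lemma card_indep_tuples_subspace:
  fixes V :: "'a::{field,finite} fvec set"
  assumes "finite V" "fv.subspace V" "card V = CARD('a) ^ m"
  shows "real (card (indep_tuples V {} r)) = q_falling CARD('a) m r"
  using card_indep_tuples[of "{}" V r] assms fv.subspace_0[OF assms(2)] by (simp add: q_falling_def)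

lemma q_falling_Suc: "q_falling x m (Suc r) = q_falling x m r * (x ^ m - x ^ r)"
  by (simp add: q_falling_def)

lemma q_falling_Suc_Suc: "q_falling x (Suc m) (Suc r) = (x ^ Suc m - 1) * x ^ r * q_falling x m r"
proof -
  have "q_falling x (Suc m) (Suc r) = (x ^ Suc m - x ^ 0) * (\<Prod>t<r. x ^ Suc m - x ^ Suc t)"
    unfolding q_falling_def by (rule prod.lessThan_Suc_shift)
  also have "(\<Prod>t<r. x ^ Suc m - x ^ Suc t) = (\<Prod>t<r. x * (x ^ m - x ^ t))"
    by (rule prod.cong) (auto simp: algebra_simps)
  also have "\<dots> = x ^ r * q_falling x m r" unfolding q_falling_def by (simp add: prod.distrib)
  finally show ?thesis by simp
qed

lemma q_falling_Suc_diff: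
  "q_falling x (Suc m) (Suc r) - q_falling x m (Suc r) = x ^ m * (x ^ Suc r - 1) * q_falling x m r"
  unfolding q_falling_Suc_Suc[of x m r] q_falling_Suc[of x m r] by (simp add: algebra_simps power_add[symmetric])

lemma q_falling_eq_prod:
  assumes "r \<le> m"
  shows "q_falling x m r = (\<Prod>t<r. x ^ t) * (\<Prod>t\<in>{int m - int r + 1..int m}. x ^ nat t - 1)"
  using assms
proof (induction r)
  case (Suc r)
  define f where "f t = x ^ nat t - 1" for t :: int
  have "{int m - int (Suc r) + 1..int m} = insert (int m - int r) {int m - int r + 1..int m}" by auto
  then have split: "(\<Prod>t\<in>{int m - int (Suc r) + 1..int m}. f t) =
      f (int m - int r) * (\<Prod>t\<in>{int m - int r + 1..int m}. f t)"
    by simp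
  have "f (int m - int r) = x ^ (m - r) - 1" unfolding f_def by (metis nat_minus_as_int)
  have "q_falling x m (Suc r) = q_falling x m r * (x ^ m - x ^ r)" by (rule q_falling_Suc)
  also have "x ^ m - x ^ r = x ^ r * (x ^ (m - r) - 1)"
    using Suc.prems by (simp add: algebra_simps power_add[symmetric])
  also have "q_falling x m r = (\<Prod>t<r. x ^ t) * (\<Prod>t\<in>{int m - int r + 1..int m}. f t)"
    using Suc unfolding f_def by simp
  finally show ?case unfolding f_def[symmetric] split \<open>f (int m - int r) = x ^ (m - r) - 1\<close>
    by (simp add: algebra_simps)
qed (simp add: q_falling_def)

lemma gauss_mult_q_falling:
  assumes "r \<le> m" "Q \<ge> 2"
  shows "gauss Q (int m) (int r) * q_falling Q r r = q_falling Q m r"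
proof -
  define N where "N = (\<Prod>t\<in>{int m - int r + 1..int m}. real Q ^ nat t - 1)"
  define D where "D = (\<Prod>t\<in>{1..int r}. real Q ^ nat t - 1)"
  have "D \<noteq> 0" unfolding D_def
  proof (subst prod_zero_iff, simp, safe)
    fix t assume "t \<in> {1..int r}" "real Q ^ nat t - 1 = 0"
    moreover have "real Q ^ nat t > 1" using assms \<open>t \<in> {1..int r}\<close> by (intro one_less_power) auto
    ultimately show False by simp
  qed
  moreover have "gauss Q (int m) (int r) = N / D" unfolding gauss_def N_def D_def using assms by auto
  moreover have "q_falling Q r r = (\<Prod>t<r. real Q ^ t) * D"
    unfolding D_def using q_falling_eq_prod[of r r] by simp
  moreover have "q_falling Q m r = (\<Prod>t<r. real Q ^ t) * N"
    unfolding N_def using q_falling_eq_prod[OF assms(1)] by simp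
  ultimately show ?thesis by simp
qed

lemma q_falling_diff_eq_gauss:
  assumes "1 \<le> j" "j \<le> k" "Q \<ge> 2"
  shows "q_falling Q k j - q_falling Q (k - 1) j =
    real Q ^ (k - j) * gauss Q (int (k - 1)) (int (j - 1)) * q_falling Q j j"
proof -
  define m where "m = k - 1"
  define l where "l = j - 1"
  have ml: "k = Suc m" "j = Suc l" and lm: "l \<le> m" using assms unfolding m_def l_def by auto
  define x where "x = real Q"
  have "q_falling x k j - q_falling x (k - 1) j = x ^ m * (x ^ Suc l - 1) * q_falling x m l"
    unfolding ml by (simp add: q_falling_Suc_diff)
  also have "q_falling x m l = gauss Q (int m) (int l) * q_falling x l l"
    unfolding x_def using gauss_mult_q_falling[OF lm assms(3)] by simp
  also have "x ^ m = x ^ (m - l) * x ^ l" using lm by (simp add: power_add[symmetric])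
  finally have "q_falling x k j - q_falling x (k - 1) j =
      x ^ (m - l) * gauss Q (int m) (int l) * ((x ^ Suc l - 1) * x ^ l * q_falling x l l)"
    by (simp add: algebra_simps)
  also have "(x ^ Suc l - 1) * x ^ l * q_falling x l l = q_falling x j j"
    unfolding ml by (simp add: q_falling_Suc_Suc)
  finally show ?thesis unfolding x_def ml by simp
qed

lemma prod_pow_diff_eq:
  fixes x :: real
  assumes "K \<le> n"
  shows "(\<Prod>t<r. x ^ n - x ^ K * x ^ t) = x ^ (r * K) * q_falling x (n - K) r"
proof -
  have "(\<Prod>t<r. x ^ n - x ^ K * x ^ t) = (\<Prod>t<r. x ^ K * (x ^ (n - K) - x ^ t))"
    using assms by (simp add: right_diff_distrib flip: power_add)
  also have "\<dots> = (x ^ K) ^ r * q_falling x (n - K) r" unfolding q_falling_def by (simp add: prod.distrib)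
  finally show ?thesis by (simp add: power_mult[symmetric] mult.commute)
qed

lemma q_falling_pos:
  assumes "r \<le> m" "x > 1"
  shows "q_falling x m r > 0"
  unfolding q_falling_def using assms by (intro prod_pos) (auto simp: power_strict_increasing)

lemma q_falling_ge:
  assumes "1 \<le> r" "r \<le> m" "x \<ge> 2"
  shows "q_falling x m r \<ge> real m"
proof -
  obtain r' where r: "r = Suc r'" using assms by (cases r) auto
  have split: "q_falling x m r = (x ^ m - x ^ 0) * (\<Prod>t<r'. x ^ m - x ^ Suc t)"
    unfolding q_falling_def r by (rule prod.lessThan_Suc_shift)
  have tail: "(\<Prod>t<r'. x ^ m - x ^ Suc t) \<ge> 1"
  proof (rule prod_ge_1)
    fix t assume "t \<in> {..<r'}"
    then have "x * x ^ Suc t \<le> x ^ m"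
      using assms r power_increasing[of "Suc (Suc t)" m x] by auto
    moreover have "2 * x ^ Suc t \<le> x * x ^ Suc t" by (rule mult_right_mono) (use assms in auto)
    moreover have "x ^ Suc t \<ge> 1" by (rule one_le_power) (use assms in auto)
    ultimately show "1 \<le> x ^ m - x ^ Suc t" by linarith
  qed
  have head: "real m + 1 \<le> x ^ m"
  proof -
    have "real m + 1 \<le> 2 ^ m" using less_exp[of m] by (metis Suc_leI of_nat_Suc of_nat_le_iff
        of_nat_numeral of_nat_power add.commute)
    also have "(2::real) ^ m \<le> x ^ m" using assms by (intro power_mono) auto
    finally show ?thesis .
  qed
  then have "real m \<le> (x ^ m - 1) * 1" by simp
  also have "\<dots> \<le> (x ^ m - 1) * (\<Prod>t<r'. x ^ m - x ^ Suc t)"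
    using head tail by (intro mult_left_mono) auto
  finally show ?thesis using split by simp
qed

definition ebar_coeff :: "nat \<Rightarrow> nat \<Rightarrow> nat \<Rightarrow> nat \<Rightarrow> real" where
  "ebar_coeff Q j k s =
     real Q ^ (k - j) * gauss Q (int (k - 1)) (int (j - 1))
     - (real s - 1) * real Q ^ (k - j - 1) * gauss Q (int (k - 2)) (int (j - 1))"

lemma ebar1_eq:
  assumes "1 \<le> d" "2 \<le> k"
  shows "ebar1 Q d k s + 1 = ebar_coeff Q d k s"
proof -
  have int_eqs: "int k - 1 = int (k - 1)" "int d - 1 = int (d - 1)" "int k - 2 = int (k - 2)"
    using assms by auto
  show ?thesis unfolding ebar1_def ebar_coeff_def int_eqs by simp
qed

lemma ebar2_eq:
  assumes "1 \<le> i" "i \<le> d" "2 \<le> k" "(s + 1) * k \<le> n"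
  shows "ebar2 Q i d k n s + 1 =
    real Q ^ ((d - i) * ((s + 1) * k - i)) * gauss Q (int (n - (s + 1) * k)) (int (d - i))
    * ebar_coeff Q i k s"
proof -
  have "int (s + 1) * int k = int ((s + 1) * k)" by (simp only: of_nat_mult)
  then have int_eqs: "int n - int (s + 1) * int k = int (n - (s + 1) * k)"
    "int d - int i = int (d - i)" "int k - 1 = int (k - 1)" "int i - 1 = int (i - 1)"
    "int k - 2 = int (k - 2)" using assms by auto
  show ?thesis unfolding ebar2_def ebar_coeff_def int_eqs by simp
qed

lemma ebar_coeff_mult_q_falling:
  assumes "1 \<le> j" "j < k" "Q \<ge> 2"
  shows "ebar_coeff Q j k s * q_falling Q j j =
    (q_falling Q k j - q_falling Q (k - 1) j)
    - (real s - 1) * (q_falling Q (k - 1) j - q_falling Q (k - 2) j)"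
proof -
  have "k - 1 - 1 = k - 2" "k - 1 - j = k - j - 1" by auto
  then show ?thesis
    using q_falling_diff_eq_gauss[of j k Q] q_falling_diff_eq_gauss[of j "k - 1" Q] assms
    unfolding ebar_coeff_def by (simp add: algebra_simps)
qed

lemma ebar_coeff_mult_eq:
  assumes Q: "Q \<ge> 2" and j: "1 \<le> j" "j < k"
  shows "ebar_coeff Q j k s * q_falling Q j j * (real Q ^ (k - 1) - real Q ^ (j - 1)) =
    (real Q ^ j - 1) * q_falling Q (k - 2) (j - 1) * real Q ^ (j - 1) * real Q ^ (k - 2)
    * (real Q * (real Q ^ (k - 1) - 1) - (real s - 1) * (real Q ^ (k - j) - 1))"
proof -
  define x where "x = real Q"
  define m where "m = k - 2"
  define l where "l = j - 1"
  have ml: "k = Suc (Suc m)" "j = Suc l" and "l \<le> m" using j unfolding m_def l_def by auto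
  define F where "F = q_falling x m l"
  define G where "G = q_falling x (Suc m) l"
  define P where "P = x ^ Suc m"
  define z where "z = x ^ l"
  define w where "w = x ^ (Suc m - l) - 1"
  define a where "a = x ^ Suc l - 1"
  have "P = x ^ l * x ^ (Suc m - l)" unfolding P_def using \<open>l \<le> m\<close> by (simp flip: power_add)
  then have Pz: "P - z = z * w" unfolding z_def w_def by (simp add: right_diff_distrib)
  have G: "G * (P - z) = (P - 1) * z * F"
    using q_falling_Suc[of x "Suc m" l] q_falling_Suc_Suc[of x m l] unfolding P_def z_def F_def G_def
    by simp
  have d1: "q_falling x k j - q_falling x (k - 1) j = P * a * G"
    using q_falling_Suc_diff[of x "Suc m" l] unfolding ml P_def a_def G_def by simp
  have d2: "q_falling x (k - 1) j - q_falling x (k - 2) j = x ^ m * a * F"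
    using q_falling_Suc_diff[of x m l] unfolding ml a_def F_def by simp
  have "ebar_coeff Q j k s * q_falling x j j = P * a * G - (real s - 1) * (x ^ m * a * F)"
    unfolding x_def using ebar_coeff_mult_q_falling[OF j Q, of s] d1 d2 by (simp only: x_def)
  then have "ebar_coeff Q j k s * q_falling x j j * (P - z) =
      (P * a * G - (real s - 1) * (x ^ m * a * F)) * (P - z)"
    by simp
  also have "\<dots> = a * P * (G * (P - z)) - (real s - 1) * x ^ m * a * F * (P - z)"
    by (simp add: algebra_simps)
  also have "\<dots> = a * P * ((P - 1) * z * F) - (real s - 1) * x ^ m * a * F * (z * w)"
    unfolding G unfolding Pz ..
  also have "\<dots> = a * F * z * x ^ m * (x * (P - 1) - (real s - 1) * w)"
    unfolding P_def by (simp add: algebra_simps)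
  finally show ?thesis unfolding ml a_def F_def z_def P_def w_def x_def by simp
qed

lemma ebar_coeff_pos:
  assumes Q: "Q \<ge> 2" and j: "1 \<le> j" "j < k"
    and s: "(real s - 1) * (real Q ^ (k - j) - 1) < real Q * (real Q ^ (k - 1) - 1)"
  shows "ebar_coeff Q j k s > 0"
proof -
  let ?x = "real Q"
  have "?x ^ (j - 1) < ?x ^ (k - 1)" using Q j by (intro power_strict_increasing) auto
  moreover have "1 < ?x ^ j" using Q j by (intro one_less_power) auto
  moreover have "q_falling ?x (k - 2) (j - 1) > 0" "q_falling ?x j j > 0"
    using Q j by (auto intro!: q_falling_pos)
  ultimately have "ebar_coeff Q j k s * q_falling ?x j j * (?x ^ (k - 1) - ?x ^ (j - 1)) > 0"
    unfolding ebar_coeff_mult_eq[OF Q j] using Q s by (intro mult_pos_pos) auto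
  then show ?thesis
    using \<open>?x ^ (j - 1) < ?x ^ (k - 1)\<close> \<open>q_falling ?x j j > 0\<close> by (simp add: zero_less_mult_iff)
qed

section \<open>Double counting the isolating rows\<close>

definition isolating_rows ::
  "nat \<Rightarrow> nat \<Rightarrow> nat \<Rightarrow> 'a::field fvec set \<Rightarrow> 'a fvec set set \<Rightarrow> 'a fvec set set" where
  "isolating_rows n d i C Cs = {A \<in> subspaces_of_dim n d. Mq_entry i A C \<and> (\<forall>B\<in>Cs. \<not> Mq_entry i A B)}"

definition avoiding_tuples ::
  "'a::{field,finite} fvec set \<Rightarrow> 'a fvec set set \<Rightarrow> nat \<Rightarrow> 'a fvec list set" where
  "avoiding_tuples C Cs i = {bs \<in> indep_tuples C {} i. \<forall>B\<in>Cs. \<not> set bs \<subseteq> B}"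

lemma exists_hyperplane_containing:
  fixes C X :: "'a::{field,finite} fvec set"
  assumes C: "finite C" "fv.subspace C" "card C = CARD('a) ^ k" and X: "fv.subspace X" "X \<subset> C"
  shows "\<exists>H. fv.subspace H \<and> X \<subseteq> H \<and> H \<subseteq> C \<and> card H = CARD('a) ^ (k - 1)"
proof -
  have "finite X" using X(2) C(1) finite_subset by auto
  have "card X < card C" using X(2) C(1) by (rule psubset_card_mono[rotated])
  then have "CARD('a) ^ fv.dim X < CARD('a) ^ k" using card_subspace[OF \<open>finite X\<close> X(1)] C(3) by simp
  then have "fv.dim X < k" using CARD_field_ge_2[where 'a='a] by simp
  then show ?thesis
    using exists_subspace_between[OF C(1,2) X(1) _ card_subspace[OF \<open>finite X\<close> X(1)] C(3), of "k - 1"] X(2)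
    by auto
qed

lemma exists_hyperplane_containing_inter:
  fixes B C :: "'a::{field,finite} fvec set"
  assumes C: "C \<in> subspaces_of_dim n k" and B: "B \<in> subspaces_of_dim n k" "B \<noteq> C"
  shows "\<exists>H. fv.subspace H \<and> C \<inter> B \<subseteq> H \<and> H \<subseteq> C \<and> card H = CARD('a) ^ (k - 1)"
proof (rule exists_hyperplane_containing)
  note C_facts = subspaces_of_dimD[OF C] and B_facts = subspaces_of_dimD[OF B(1)]
  show "finite C" "fv.subspace C" "card C = CARD('a) ^ k" by (fact C_facts)+
  show "fv.subspace (C \<inter> B)" using C_facts(2) B_facts(2) by (rule fv.subspace_inter)
  have "\<not> C \<subseteq> B" using card_subset_eq[of B C] C_facts B_facts B(2) by auto
  then show "C \<inter> B \<subset> C" by auto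
qed

lemma card_indep_tuples_hyperplanes_diff_le:
  fixes C H H' :: "'a::{field,finite} fvec set"
  assumes C: "finite C" "fv.subspace C" "card C = CARD('a) ^ k" and "2 \<le> k"
    and H: "fv.subspace H" "H \<subseteq> C" "card H = CARD('a) ^ (k - 1)"
    and H': "fv.subspace H'" "H' \<subseteq> C" "card H' = CARD('a) ^ (k - 1)"
  shows "real (card (indep_tuples H {} r - indep_tuples H' {} r))
    \<le> q_falling CARD('a) (k - 1) r - q_falling CARD('a) (k - 2) r"
proof -
  let ?Q = "CARD('a)"
  have fin: "finite H" "finite (H \<inter> H')" using H(2) C(1) finite_subset by auto
  have sub: "fv.subspace (H \<inter> H')" using H(1) H'(1) by (rule fv.subspace_inter)
  have "?Q ^ (k - 1) * ?Q ^ (k - 1) \<le> ?Q ^ k * ?Q ^ fv.dim (H \<inter> H')"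
    using card_mult_le_card_inter_subspaces[OF C(1,2) H(1,2) H'(1,2)] C(3) H(3) H'(3)
      card_subspace[OF fin(2) sub] by simp
  then have "k - 1 + (k - 1) \<le> k + fv.dim (H \<inter> H')"
    using CARD_field_ge_2[where 'a='a] by (simp flip: power_add)
  then have "k - 2 \<le> fv.dim (H \<inter> H')" using \<open>2 \<le> k\<close> by linarith
  then obtain K where K: "fv.subspace K" "K \<subseteq> H \<inter> H'" "card K = ?Q ^ (k - 2)"
    using exists_subspace_between[OF fin(2) sub fv.subspace_span[of "{}"], of 0 "fv.dim (H \<inter> H')" "k - 2"]
      card_subspace[OF fin(2) sub] fv.subspace_0[OF sub] by auto
  have "finite K" using K(2) fin(2) finite_subset by blast
  have KH: "indep_tuples K {} r \<subseteq> indep_tuples H {} r" "indep_tuples K {} r \<subseteq> indep_tuples H' {} r"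
    using K(2) by (auto intro!: indep_tuples_mono)
  have fin_H: "finite (indep_tuples H {} r)" using fin(1) by (rule finite_indep_tuples)
  have "card (indep_tuples H {} r - indep_tuples H' {} r) \<le> card (indep_tuples H {} r - indep_tuples K {} r)"
    using KH fin_H by (intro card_mono) auto
  also have "\<dots> = card (indep_tuples H {} r) - card (indep_tuples K {} r)"
    using KH fin_H by (intro card_Diff_subset) (auto intro: finite_subset)
  finally have "real (card (indep_tuples H {} r - indep_tuples H' {} r))
      \<le> real (card (indep_tuples H {} r)) - real (card (indep_tuples K {} r))"
    using KH fin_H card_mono[of "indep_tuples H {} r" "indep_tuples K {} r"] by simp
  then show ?thesis
    using card_indep_tuples_subspace[OF fin(1) H(1,3)] card_indep_tuples_subspace[OF \<open>finite K\<close> K(1,3)]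
    by simp
qed

lemma card_UN_le_card_plus_card_diffs:
  assumes "finite I" "j \<in> I"
  shows "card (\<Union>i\<in>I. X i) \<le> card (X j) + (\<Sum>i\<in>I - {j}. card (X i - X j))"
proof -
  have "(\<Union>i\<in>I. X i) = X j \<union> (\<Union>i\<in>I - {j}. (X i - X j))" using assms(2) by auto
  then have "card (\<Union>i\<in>I. X i) \<le> card (X j) + card (\<Union>i\<in>I - {j}. (X i - X j))"
    by (metis card_Un_le)
  also have "\<dots> \<le> card (X j) + (\<Sum>i\<in>I - {j}. card (X i - X j))"
    using assms(1) card_UN_le[of "I - {j}" "\<lambda>i. X i - X j"] by simp
  finally show ?thesis .
qed

lemma card_avoiding_tuples_ge:
  fixes C :: "'a::{field,finite} fvec set" and Cs :: "'a fvec set set"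
  assumes C: "C \<in> subspaces_of_dim n k"
    and Cs: "Cs \<subseteq> subspaces_of_dim n k" "C \<notin> Cs" "card Cs = s" "1 \<le> s" and "2 \<le> k"
  shows "q_falling CARD('a) k i - q_falling CARD('a) (k - 1) i
      - (real s - 1) * (q_falling CARD('a) (k - 1) i - q_falling CARD('a) (k - 2) i)
    \<le> real (card (avoiding_tuples C Cs i))"
proof -
  let ?Q = "CARD('a)" and ?f = "q_falling CARD('a)"
  note C_facts = subspaces_of_dimD[OF C]
  have "finite Cs" using Cs(3,4) by (metis card.infinite not_one_le_zero)
  have "\<exists>H. fv.subspace H \<and> C \<inter> B \<subseteq> H \<and> H \<subseteq> C \<and> card H = ?Q ^ (k - 1)" if "B \<in> Cs" for B
    using exists_hyperplane_containing_inter[OF C] that Cs(1,2) by blast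
  then obtain H where H: "\<And>B. B \<in> Cs \<Longrightarrow>
      fv.subspace (H B) \<and> C \<inter> B \<subseteq> H B \<and> H B \<subseteq> C \<and> card (H B) = ?Q ^ (k - 1)"
    by metis
  obtain B1 where B1: "B1 \<in> Cs" using Cs(3,4) by fastforce
  define T where "T = indep_tuples C {} i"
  define X where "X B = indep_tuples (H B) {} i" for B
  have fin_X: "finite (X B)" if "B \<in> Cs" for B
    unfolding X_def using H[OF that] C_facts(1) by (intro finite_indep_tuples) (auto intro: finite_subset)
  have card_X: "real (card (X B)) = ?f (k - 1) i" if "B \<in> Cs" for B
    unfolding X_def using H[OF that] C_facts(1) finite_subset
    by (intro card_indep_tuples_subspace) auto
  have diff_le: "real (card (X B - X B1)) \<le> ?f (k - 1) i - ?f (k - 2) i" if "B \<in> Cs" for B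
    unfolding X_def using H[OF that] H[OF B1] C_facts \<open>2 \<le> k\<close>
    by (intro card_indep_tuples_hyperplanes_diff_le) auto
  have "T - avoiding_tuples C Cs i \<subseteq> (\<Union>B\<in>Cs. X B)"
  proof
    fix bs assume bs: "bs \<in> T - avoiding_tuples C Cs i"
    then obtain B where B: "B \<in> Cs" "set bs \<subseteq> B" unfolding T_def avoiding_tuples_def by auto
    then have "set bs \<subseteq> H B" using bs H[OF B(1)] unfolding T_def indep_tuples_def by auto
    then show "bs \<in> (\<Union>B\<in>Cs. X B)" using bs B(1) unfolding X_def T_def indep_tuples_def by auto
  qed
  then have "card (T - avoiding_tuples C Cs i) \<le> card (\<Union>B\<in>Cs. X B)"
    using fin_X \<open>finite Cs\<close> by (intro card_mono) auto
  also have "\<dots> \<le> card (X B1) + (\<Sum>B\<in>Cs - {B1}. card (X B - X B1))"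
    using \<open>finite Cs\<close> B1 by (rule card_UN_le_card_plus_card_diffs)
  finally have "real (card (T - avoiding_tuples C Cs i))
      \<le> real (card (X B1)) + (\<Sum>B\<in>Cs - {B1}. real (card (X B - X B1)))"
    by (simp flip: of_nat_sum)
  also have "\<dots> \<le> ?f (k - 1) i + (\<Sum>B\<in>Cs - {B1}. ?f (k - 1) i - ?f (k - 2) i)"
    using card_X[OF B1] diff_le by (intro add_mono sum_mono) auto
  also have "\<dots> = ?f (k - 1) i + (real s - 1) * (?f (k - 1) i - ?f (k - 2) i)"
    using B1 \<open>finite Cs\<close> Cs(3,4) by (simp add: card_Diff_singleton)
  finally have "real (card (T - avoiding_tuples C Cs i)) \<le> \<dots>" .
  moreover have "avoiding_tuples C Cs i \<subseteq> T" "finite T"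
    unfolding T_def avoiding_tuples_def using C_facts(1) by (auto intro: finite_indep_tuples)
  moreover have "real (card T) = ?f k i" unfolding T_def using C_facts by (intro card_indep_tuples_subspace)
  ultimately show ?thesis by (simp add: card_Diff_subset card_mono finite_subset)
qed

lemma card_le_card_image_mult:
  assumes "finite P" "\<And>y. y \<in> f ` P \<Longrightarrow> real (card {p \<in> P. f p = y}) \<le> b"
  shows "real (card P) \<le> real (card (f ` P)) * b"
proof -
  have "card P = card (\<Union>y\<in>f ` P. {p \<in> P. f p = y})" by (rule arg_cong[of _ _ card]) auto
  also have "\<dots> \<le> (\<Sum>y\<in>f ` P. card {p \<in> P. f p = y})" using assms(1) by (intro card_UN_le) auto
  finally have "real (card P) \<le> (\<Sum>y\<in>f ` P. real (card {p \<in> P. f p = y}))"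
    by (simp flip: of_nat_sum)
  also have "\<dots> \<le> (\<Sum>y\<in>f ` P. b)" by (intro sum_mono assms(2))
  finally show ?thesis by simp
qed

lemma card_span_Union_subspaces_le:
  fixes C :: "'a::{field,finite} fvec set"
  assumes "C \<in> subspaces_of_dim n k" "Cs \<subseteq> subspaces_of_dim n k" "finite Cs" "card Cs = s"
  shows "card (fv.span (C \<union> \<Union>Cs)) \<le> CARD('a) ^ ((s + 1) * k)"
proof -
  have facts: "finite B" "fv.span B = B" "card B = CARD('a) ^ k" if "B \<in> insert C Cs" for B
    using subspaces_of_dimD[of B n k] that assms(1,2) by auto
  have "card (fv.span (C \<union> \<Union>Cs)) \<le> card (fv.span C) * (\<Prod>B\<in>Cs. card (fv.span B))"
    using facts assms(3) by (intro card_span_UN_le) auto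
  also have "\<dots> = CARD('a) ^ k * (\<Prod>B\<in>Cs. CARD('a) ^ k)"
    using facts by (metis (no_types, lifting) insertCI prod.cong)
  finally show ?thesis using assms(4) by (simp add: algebra_simps flip: power_mult power_add)
qed

lemma card_indep_tuples_Fqn_ge:
  fixes U :: "'a::{field,finite} fvec set"
  assumes U: "finite U" "fv.span U \<subseteq> Fqn n" "card (fv.span U) \<le> CARD('a) ^ K" and "K + r \<le> n"
  shows "real CARD('a) ^ (r * K) * q_falling CARD('a) (n - K) r \<le> real (card (indep_tuples (Fqn n) U r))"
proof -
  let ?x = "real CARD('a)"
  have "?x ^ (r * K) * q_falling ?x (n - K) r = (\<Prod>t<r. ?x ^ n - ?x ^ K * ?x ^ t)"
    using assms(4) by (simp add: prod_pow_diff_eq)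
  also have "\<dots> \<le> (\<Prod>t<r. real (card (Fqn n :: 'a fvec set)) - real (card (fv.span U)) * ?x ^ t)"
  proof (rule prod_mono, rule conjI)
    fix t assume "t \<in> {..<r}"
    then have "?x ^ K * ?x ^ t \<le> ?x ^ n"
      using assms(4) CARD_field_ge_2[where 'a='a] by (simp flip: power_add add: power_increasing)
    then show "0 \<le> ?x ^ n - ?x ^ K * ?x ^ t" by simp
    have "real (card (fv.span U)) \<le> ?x ^ K" using U(3) by (metis of_nat_le_iff of_nat_power)
    then show "?x ^ n - ?x ^ K * ?x ^ t
        \<le> real (card (Fqn n :: 'a fvec set)) - real (card (fv.span U)) * ?x ^ t"
      by (simp add: card_Fqn mult_right_mono)
  qed
  also have "\<dots> = real (card (indep_tuples (Fqn n) U r))"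
    by (rule card_indep_tuples[OF U(1) finite_Fqn Fqn_subspace U(2), symmetric])
  finally show ?thesis .
qed

lemma card_indep_pairs_le:
  fixes A I U :: "'a::{field,finite} fvec set"
  assumes A: "finite A" "fv.subspace A" "card A = CARD('a) ^ d"
    and I: "fv.subspace I" "I \<subseteq> A" "card I = CARD('a) ^ i"
    and U: "finite U" "I \<subseteq> fv.span U" and "i \<le> d"
  shows "real (card (indep_tuples I {} i \<times> indep_tuples A U (d - i)))
    \<le> q_falling CARD('a) i i * (real CARD('a) ^ ((d - i) * i) * q_falling CARD('a) (d - i) (d - i))"
proof -
  let ?x = "real CARD('a)"
  have "finite I" using I(2) A(1) finite_subset by auto
  have span_I: "fv.span I = I" using I(1) by simp
  have "indep_tuples A U (d - i) \<subseteq> indep_tuples A I (d - i)"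
    unfolding indep_tuples_def using indep_over_anti_mono[OF U(1) \<open>finite I\<close>] U(2) span_I by auto
  then have "card (indep_tuples A U (d - i)) \<le> card (indep_tuples A I (d - i))"
    using A(1) by (intro card_mono finite_indep_tuples)
  then have "real (card (indep_tuples A U (d - i))) \<le> (\<Prod>t<d - i. ?x ^ d - ?x ^ i * ?x ^ t)"
    using card_indep_tuples[OF \<open>finite I\<close> A(1,2), of "d - i"] span_I I(2,3) A(3) by simp
  also have "\<dots> = ?x ^ ((d - i) * i) * q_falling ?x (d - i) (d - i)"
    using \<open>i \<le> d\<close> by (simp add: prod_pow_diff_eq)
  finally show ?thesis
    using card_indep_tuples_subspace[OF \<open>finite I\<close> I(1,3), of i]
    by (simp add: card_cartesian_product mult_left_mono q_falling_pos)
qed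

definition span_pair :: "'a::field fvec list \<times> 'a fvec list \<Rightarrow> 'a fvec set" where
  "span_pair = (\<lambda>(bs, ws). fv.span (set bs \<union> set ws))"

lemma card_spanning_pairs_le:
  fixes A C U V :: "'a::{field,finite} fvec set"
  assumes A: "A \<in> subspaces_of_dim n d" and C: "fv.subspace C" "card (A \<inter> C) = CARD('a) ^ i"
    and U: "finite U" "C \<subseteq> fv.span U" and "i \<le> d"
  shows "real (card {p \<in> indep_tuples C {} i \<times> indep_tuples V U (d - i). span_pair p = A})
    \<le> q_falling CARD('a) i i * (real CARD('a) ^ ((d - i) * i) * q_falling CARD('a) (d - i) (d - i))"
proof -
  note A_facts = subspaces_of_dimD[OF A]
  have "{p \<in> indep_tuples C {} i \<times> indep_tuples V U (d - i). span_pair p = A}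
      \<subseteq> indep_tuples (A \<inter> C) {} i \<times> indep_tuples A U (d - i)"
  proof
    fix p assume "p \<in> {p \<in> indep_tuples C {} i \<times> indep_tuples V U (d - i). span_pair p = A}"
    moreover obtain bs ws where "p = (bs, ws)" by fastforce
    moreover have "set bs \<union> set ws \<subseteq> fv.span (set bs \<union> set ws)" by (rule fv.span_superset)
    ultimately show "p \<in> indep_tuples (A \<inter> C) {} i \<times> indep_tuples A U (d - i)"
      unfolding indep_tuples_def span_pair_def by auto
  qed
  then have "card {p \<in> indep_tuples C {} i \<times> indep_tuples V U (d - i). span_pair p = A}
      \<le> card (indep_tuples (A \<inter> C) {} i \<times> indep_tuples A U (d - i))"
    using A_facts(1) by (intro card_mono finite_cartesian_product finite_indep_tuples) auto
  also have "real \<dots> \<le> q_falling CARD('a) i i *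
      (real CARD('a) ^ ((d - i) * i) * q_falling CARD('a) (d - i) (d - i))"
    using A_facts C U \<open>i \<le> d\<close> by (intro card_indep_pairs_le) (auto intro: fv.subspace_inter)
  finally show ?thesis by simp
qed

lemma span_avoiding_extension_isolating:
  fixes C :: "'a::{field,finite} fvec set" and Cs :: "'a fvec set set"
  assumes C: "C \<in> subspaces_of_dim n k" and Cs: "Cs \<subseteq> subspaces_of_dim n k" "finite Cs"
    and bs: "bs \<in> avoiding_tuples C Cs i" and ws: "ws \<in> indep_tuples (Fqn n) (C \<union> \<Union>Cs) (d - i)"
    and "i \<le> d"
  shows "fv.span (set bs \<union> set ws) \<in> isolating_rows n d i C Cs"
    and "fv.span (set bs \<union> set ws) \<inter> C = fv.span (set bs)"
proof -
  define U where "U = C \<union> \<Union>Cs"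
  define A where "A = fv.span (set bs \<union> set ws)"
  define I where "I = fv.span (set bs)"
  note C_facts = subspaces_of_dimD[OF C]
  have B_facts: "finite B" "fv.subspace B" "B \<subseteq> Fqn n" if "B \<in> Cs" for B
    using subspaces_of_dimD[of B n k] that Cs(1) by auto
  have "finite U" unfolding U_def using C_facts B_facts Cs(2) by auto
  have U_sub: "C \<subseteq> fv.span U" "\<And>B. B \<in> Cs \<Longrightarrow> B \<subseteq> fv.span U"
    using fv.span_superset[of U] unfolding U_def by auto
  have bs_facts: "length bs = i" "set bs \<subseteq> C" "indep_over {} bs" "\<forall>B\<in>Cs. \<not> set bs \<subseteq> B"
    using bs unfolding avoiding_tuples_def indep_tuples_def by auto
  have ws_facts: "length ws = d - i" "set ws \<subseteq> Fqn n" "indep_over U ws"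
    using ws unfolding indep_tuples_def U_def by auto
  have I_C: "I \<subseteq> C" unfolding I_def using bs_facts(2) C_facts(2) by (intro fv.span_minimal)
  have A_U: "A \<inter> fv.span U = I" and card_A: "card A = CARD('a) ^ d"
    using span_indep_extension[OF \<open>finite U\<close> bs_facts(3) _ ws_facts(3)] I_C U_sub(1)
      bs_facts(1) ws_facts(1) \<open>i \<le> d\<close> unfolding A_def I_def by auto
  have card_I: "card I = CARD('a) ^ i" using bs_facts(1,3) unfolding I_def indep_over_def by simp
  have "finite I" using I_C C_facts(1) finite_subset by auto
  have "A \<subseteq> Fqn n" unfolding A_def
    using bs_facts(2) ws_facts(2) C_facts(4) by (intro fv.span_minimal Fqn_subspace) auto
  then have "finite A" using finite_Fqn finite_subset by blast
  have A_row: "A \<in> subspaces_of_dim n d"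
    using \<open>A \<subseteq> Fqn n\<close> dim_eq_if_card_eq[OF \<open>finite A\<close> _ card_A]
    unfolding subspaces_of_dim_def sdim_def A_def by auto
  show A_C: "A \<inter> C = I" using A_U I_C U_sub(1) by auto
  have "\<not> Mq_entry i A B" if B: "B \<in> Cs" for B
  proof
    assume "Mq_entry i A B"
    moreover have "A \<inter> B = I \<inter> B" using A_U U_sub(2)[OF B] I_C by auto
    ultimately have "card (I \<inter> B) = CARD('a) ^ i"
      using card_subspace[of "I \<inter> B"] \<open>finite I\<close> B_facts[OF B]
      unfolding Mq_entry_def sdim_def I_def by (simp add: fv.subspace_inter)
    then have "I \<subseteq> B" using card_subset_eq[of I "I \<inter> B"] \<open>finite I\<close> card_I by auto
    then show False using bs_facts(4) B fv.span_superset[of "set bs"] unfolding I_def by auto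
  qed
  moreover have "Mq_entry i A C"
    using A_C dim_eq_if_card_eq[OF \<open>finite I\<close> _ card_I] unfolding Mq_entry_def sdim_def I_def by simp
  ultimately show "A \<in> isolating_rows n d i C Cs" using A_row unfolding isolating_rows_def by auto
qed

lemma finite_isolating_rows: "finite (isolating_rows n d i C (Cs :: 'a::{field,finite} fvec set set))"
  unfolding isolating_rows_def subspaces_of_dim_def
  by (rule finite_subset[of _ "Pow (Fqn n)"]) (auto simp: finite_Fqn)

lemma card_isolating_rows_ge:
  fixes C :: "'a::{field,finite} fvec set" and Cs :: "'a fvec set set"
  assumes C: "C \<in> subspaces_of_dim n k" and Cs: "Cs \<subseteq> subspaces_of_dim n k" "finite Cs" "card Cs = s"
    and "i \<le> d" and n: "(s + 1) * k + (d - i) \<le> n"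
  shows "real (card (avoiding_tuples C Cs i)) *
      (real CARD('a) ^ ((d - i) * ((s + 1) * k)) * q_falling CARD('a) (n - (s + 1) * k) (d - i))
    \<le> real (card (isolating_rows n d i C Cs)) *
      (q_falling CARD('a) i i * (real CARD('a) ^ ((d - i) * i) * q_falling CARD('a) (d - i) (d - i)))"
    (is "?T * ?lower \<le> ?G * ?upper")
proof -
  define U where "U = C \<union> \<Union>Cs"
  define P where "P = avoiding_tuples C Cs i \<times> indep_tuples (Fqn n) U (d - i)"
  note C_facts = subspaces_of_dimD[OF C]
  have B_facts: "finite B" "B \<subseteq> Fqn n" if "B \<in> Cs" for B
    using subspaces_of_dimD[of B n k] that Cs(1) by auto
  have "finite U" unfolding U_def using C_facts(1) B_facts(1) Cs(2) by auto
  have span_U: "fv.span U \<subseteq> Fqn n"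
    unfolding U_def using C_facts(4) B_facts(2) by (intro fv.span_minimal Fqn_subspace) blast
  have "C \<subseteq> fv.span U" using fv.span_superset[of U] unfolding U_def by auto
  have "finite (avoiding_tuples C Cs i)" unfolding avoiding_tuples_def
    by (rule finite_subset[OF _ finite_indep_tuples[OF C_facts(1)]]) auto
  then have "finite P" unfolding P_def by (intro finite_cartesian_product finite_indep_tuples finite_Fqn)
  have row: "span_pair p \<in> isolating_rows n d i C Cs" "span_pair p \<inter> C = fv.span (set (fst p))"
    if "p \<in> P" for p
  proof -
    obtain bs ws where "p = (bs, ws)" by fastforce
    then show "span_pair p \<in> isolating_rows n d i C Cs" "span_pair p \<inter> C = fv.span (set (fst p))"
      using span_avoiding_extension_isolating[OF C Cs(1,2) _ _ \<open>i \<le> d\<close>, of bs ws] that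
      unfolding P_def U_def span_pair_def by auto
  qed
  have "?T * ?lower \<le> real (card P)"
    using card_indep_tuples_Fqn_ge[OF \<open>finite U\<close> span_U _ n,
        OF card_span_Union_subspaces_le[OF C Cs, unfolded U_def[symmetric]]]
    unfolding P_def by (simp add: card_cartesian_product mult_left_mono)
  also have "\<dots> \<le> real (card (span_pair ` P)) * ?upper"
  proof (rule card_le_card_image_mult[OF \<open>finite P\<close>])
    fix A assume "A \<in> span_pair ` P"
    then obtain p0 where p0: "p0 \<in> P" "A = span_pair p0" by auto
    have A_row: "A \<in> subspaces_of_dim n d" using row(1)[OF p0(1)] p0(2) unfolding isolating_rows_def by auto
    have "card (A \<inter> C) = CARD('a) ^ i"
      using row(2)[OF p0(1)] p0 unfolding P_def avoiding_tuples_def indep_tuples_def indep_over_def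
      by auto
    have "{p \<in> P. span_pair p = A}
        \<subseteq> {p \<in> indep_tuples C {} i \<times> indep_tuples (Fqn n) U (d - i). span_pair p = A}"
      unfolding P_def avoiding_tuples_def by auto
    then have "card {p \<in> P. span_pair p = A}
        \<le> card {p \<in> indep_tuples C {} i \<times> indep_tuples (Fqn n) U (d - i). span_pair p = A}"
      using finite_cartesian_product[OF finite_indep_tuples[OF C_facts(1)] finite_indep_tuples[OF finite_Fqn]]
      by (intro card_mono finite_Collect_conjI) auto
    also have "real \<dots> \<le> ?upper"
      using A_row C_facts(2) \<open>card (A \<inter> C) = CARD('a) ^ i\<close> \<open>finite U\<close> \<open>C \<subseteq> fv.span U\<close> \<open>i \<le> d\<close>
      by (rule card_spanning_pairs_le)
    finally show "real (card {p \<in> P. span_pair p = A}) \<le> ?upper" by simp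
  qed
  also have "\<dots> \<le> ?G * ?upper"
  proof (rule mult_right_mono)
    show "real (card (span_pair ` P)) \<le> ?G"
      using row(1) finite_isolating_rows by (intro of_nat_mono card_mono) auto
    show "0 \<le> ?upper" using CARD_field_ge_2[where 'a='a] \<open>i \<le> d\<close>
      by (intro mult_nonneg_nonneg less_imp_le[OF q_falling_pos]) auto
  qed
  finally show ?thesis .
qed

lemma disjunct_Mq:
  fixes i d k s n :: nat
  assumes "1 \<le> i" "i \<le> d" "d < k" "1 \<le> s" and n: "(s + 1) * k + (d - i) \<le> n"
  shows "disjunct (subspaces_of_dim n d :: 'a::{field,finite} fvec set set) (subspaces_of_dim n k)
    (Mq_entry i) s (ebar2 CARD('a) i d k n s)"
  unfolding disjunct_def
proof (intro ballI allI impI)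
  fix C :: "'a fvec set" and Cs
  assume C: "C \<in> subspaces_of_dim n k" and Cs: "Cs \<subseteq> subspaces_of_dim n k \<and> C \<notin> Cs \<and> card Cs = s"
  let ?Q = "CARD('a)" and ?x = "real CARD('a)" and ?r = "d - i" and ?K = "(s + 1) * k"
  have Q: "?Q \<ge> 2" by (rule CARD_field_ge_2)
  have "finite Cs" using Cs \<open>1 \<le> s\<close> by (metis card.infinite not_one_le_zero)
  have "?K \<le> n" "i \<le> ?K" using n assms(2,3) by (auto intro: order_trans[OF _ mult_le_mono2])
  have "ebar_coeff ?Q i k s * q_falling ?x i i \<le> real (card (avoiding_tuples C Cs i))"
    using card_avoiding_tuples_ge[OF C] ebar_coeff_mult_q_falling[of i k ?Q s] Cs assms Q by auto
  have "(ebar2 ?Q i d k n s + 1) * (q_falling ?x i i * (?x ^ (?r * i) * q_falling ?x ?r ?r))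
      = ebar_coeff ?Q i k s * q_falling ?x i i * (?x ^ (?r * ?K) * q_falling ?x (n - ?K) ?r)"
  proof -
    have "?r * (?K - i) + ?r * i = ?r * ?K"
      using \<open>i \<le> ?K\<close> by (metis add_mult_distrib2 le_add_diff_inverse2)
    then have "?x ^ (?r * (?K - i)) * ?x ^ (?r * i) = ?x ^ (?r * ?K)" by (metis power_add)
    then show ?thesis
      using ebar2_eq[of i d k s n ?Q] gauss_mult_q_falling[of ?r "n - ?K" ?Q] assms \<open>?K \<le> n\<close> Q
      by (simp add: algebra_simps)
  qed
  also have "\<dots> \<le> real (card (avoiding_tuples C Cs i)) * (?x ^ (?r * ?K) * q_falling ?x (n - ?K) ?r)"
    using \<open>ebar_coeff ?Q i k s * q_falling ?x i i \<le> _\<close> n Q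
    by (intro mult_right_mono mult_nonneg_nonneg less_imp_le[OF q_falling_pos]) auto
  also have "\<dots> \<le> real (card (isolating_rows n d i C Cs)) * (q_falling ?x i i * (?x ^ (?r * i) * q_falling ?x ?r ?r))"
    using card_isolating_rows_ge[OF C _ \<open>finite Cs\<close> _ \<open>i \<le> d\<close>] Cs n by auto
  finally have "ebar2 ?Q i d k n s + 1 \<le> real (card (isolating_rows n d i C Cs))"
    using Q by (elim mult_right_le_imp_le) (intro mult_pos_pos q_falling_pos; simp)
  then show "ebar2 ?Q i d k n s + 1 \<le> real (card {A \<in> subspaces_of_dim n d. Mq_entry i A C \<and> (\<forall>B\<in>Cs. \<not> Mq_entry i A B)})"
    unfolding isolating_rows_def .
qed

section \<open>Growth of the disjunctness parameter\<close>

lemma ebar_ratio_tendsto_at_top: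
  assumes Q: "Q \<ge> 2" and "1 \<le> i" "i < d" "d < k" "1 \<le> s"
    and s: "real s \<le> real Q * (real Q ^ (k - 1) - 1) / (real Q ^ (k - i) - 1)"
  shows "filterlim (\<lambda>n. (ebar2 Q i d k n s + 1) / (ebar1 Q d k s + 1)) at_top sequentially"
proof -
  let ?x = "real Q" and ?r = "d - i" and ?K = "(s + 1) * k"
  have "1 < ?x ^ (k - i)" using Q assms(2-4) by (intro one_less_power) auto
  then have "real s * (?x ^ (k - i) - 1) \<le> ?x * (?x ^ (k - 1) - 1)"
    using s by (simp add: le_divide_eq)
  then have s_i: "(real s - 1) * (?x ^ (k - i) - 1) < ?x * (?x ^ (k - 1) - 1)"
    using \<open>1 < ?x ^ (k - i)\<close> by (simp add: algebra_simps)
  have "?x ^ (k - d) \<le> ?x ^ (k - i)" using Q assms(2-4) by (intro power_increasing) auto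
  then have "(real s - 1) * (?x ^ (k - d) - 1) \<le> (real s - 1) * (?x ^ (k - i) - 1)"
    using \<open>1 \<le> s\<close> by (intro mult_left_mono) auto
  with s_i have s_d: "(real s - 1) * (?x ^ (k - d) - 1) < ?x * (?x ^ (k - 1) - 1)" by linarith
  have c2: "ebar_coeff Q i k s > 0" using ebar_coeff_pos[OF Q _ _ s_i] assms by simp
  have c1: "ebar_coeff Q d k s > 0" using ebar_coeff_pos[OF Q _ _ s_d] assms by simp
  have qf: "q_falling ?x ?r ?r > 0" using Q by (intro q_falling_pos) auto
  define c where "c = ?x ^ (?r * (?K - i)) * ebar_coeff Q i k s / (ebar_coeff Q d k s * q_falling ?x ?r ?r)"
  have "c > 0" unfolding c_def using Q c1 c2 qf by simp
  have lower: "c * (real n - real ?K) \<le> (ebar2 Q i d k n s + 1) / (ebar1 Q d k s + 1)"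
    if n: "?K + ?r \<le> n" for n
  proof -
    have "(ebar2 Q i d k n s + 1) / (ebar1 Q d k s + 1) = c * q_falling ?x (n - ?K) ?r"
      using ebar2_eq[of i d k s n Q] ebar1_eq[of d k Q s] gauss_mult_q_falling[of ?r "n - ?K" Q] assms n c1 qf
      unfolding c_def by (simp add: field_simps)
    moreover have "real n - real ?K \<le> q_falling ?x (n - ?K) ?r"
      using q_falling_ge[of ?r "n - ?K" ?x] assms n Q by simp
    ultimately show ?thesis using \<open>c > 0\<close> by simp
  qed
  have "filterlim (\<lambda>n. - real ?K + real n) at_top sequentially"
    by (rule filterlim_tendsto_add_at_top[OF tendsto_const filterlim_real_sequentially])
  then have "filterlim (\<lambda>n. real n - real ?K) at_top sequentially"
    by (simp add: algebra_simps)
  then have "filterlim (\<lambda>n. c * (real n - real ?K)) at_top sequentially"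
    using \<open>c > 0\<close> by (intro filterlim_tendsto_pos_mult_at_top[OF tendsto_const]) simp_all
  then show ?thesis
  proof (rule filterlim_at_top_mono)
    show "eventually (\<lambda>n. c * (real n - real ?K) \<le> (ebar2 Q i d k n s + 1) / (ebar1 Q d k s + 1))
        sequentially"
      using lower by (intro eventually_sequentiallyI[of "?K + ?r"]) auto
  qed
qed

theorem theorem1p5:
  fixes q i d k s :: nat
  assumes field: "q = card (UNIV :: 'a::{field,finite} set)"
    and hi: "1 \<le> i" "i < (d + 1) div 2"
    and hdk: "d < k"
    and hs: "1 \<le> s" "real s \<le> real q * (real q ^ (k - 1) - 1) / (real q ^ (k - i) - 1)"
  shows "(\<forall>n. int n - int (s + 1) * int k \<ge> int d - int i \<longrightarrow>
            disjunct (subspaces_of_dim n d :: (nat \<Rightarrow> 'a) set set) (subspaces_of_dim n k)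
              (Mq_entry i) s (ebar2 q i d k n s))
       \<and> filterlim (\<lambda>n. (ebar2 q i d k n s + 1) / (ebar1 q d k s + 1)) at_top sequentially"
proof (intro conjI allI impI)
  have "i < d" using hi by linarith
  fix n assume n: "int n - int (s + 1) * int k \<ge> int d - int i"
  have int_eq: "int ((s + 1) * k + (d - i)) = int (s + 1) * int k + (int d - int i)"
    using \<open>i < d\<close> by (simp add: distrib_right)
  have "int ((s + 1) * k + (d - i)) \<le> int n" unfolding int_eq using n by linarith
  then have "(s + 1) * k + (d - i) \<le> n" by (simp only: of_nat_le_iff)
  then show "disjunct (subspaces_of_dim n d :: 'a fvec set set) (subspaces_of_dim n k)
      (Mq_entry i) s (ebar2 q i d k n s)"
    unfolding field using \<open>i < d\<close> by (intro disjunct_Mq[OF hi(1) _ hdk hs(1)]) auto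
next
  have "i < d" using hi by linarith
  then show "filterlim (\<lambda>n. (ebar2 q i d k n s + 1) / (ebar1 q d k s + 1)) at_top sequentially"
    using ebar_ratio_tendsto_at_top CARD_field_ge_2[where 'a='a] field hi(1) hdk hs by blast
qed

end
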